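(* Let $k\ge1$, let $(\Lambda,d)$ be a $k$-graph, and let $p,q\in\mathbb{N}^k$. Then $q(p\Lambda)=(q+p)\Lambda$; that is, the dual of the $k$-graph $(p\Lambda,d_p)$ with respect to $q$ and the dual of $\Lambda$ with respect to $q+p$ have the same paths, the same range and source maps, the same composition, and the same degree map.
   Context: A $k$-graph is a pair $(\Lambda,d)$ where $\Lambda$ is a countable category and $d:\Lambda\to\mathbb{N}^k$ is a functor satisfying the factorisation property: if $\lambda$ is a morphism with $d(\lambda)=m+n$, then there are unique morphisms $\mu\in d^{-1}(m)$, $\nu\in d^{-1}(n)$ with $\lambda=\mu\nu$. Morphisms are called paths; vertices are identified with paths of degree $0$; $\Lambda^n:=d^{-1}(n)$. For $\lambda$ with $d(\lambda)=n$ and $l\le m\le n$, $\lambda(l,m)$ denotes the unique path of degree $m-l$ with $\lambda=\lambda(0,l)\lambda(l,m)\lambda(m,n)$. For $p\in\mathbb{N}^k$, the dual $k$-graph $p\Lambda$ has paths $\{\lambda\in\Lambda:d(\lambda)\ge p\}$, vertices $\Lambda^p$, range $r_p(\lambda)=\lambda(0,p)$, source $s_p(\lambda)=\lambda(d(\lambda)-p,d(\lambda))$, composition $\lambda\circ_p\mu=\lambda\,\mu(p,d(\mu))$ when $s_p(\lambda)=r_p(\mu)$, and degree $d_p(\lambda)=d(\lambda)-p$; $(p\Lambda,d_p)$ is again a $k$-graph, so its dual $q(p\Lambda)$ is defined by the same recipe. *)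

theory Defs
  imports Main "HOL-Library.Function_Algebras" "HOL-Library.Countable_Set"
begin

text \<open>Elements of N^k are modelled as functions nat => nat vanishing outside {..<k};
  addition and the partial order are pointwise.\<close>

definition NK :: "nat \<Rightarrow> (nat \<Rightarrow> nat) set" where
  "NK k = {x. \<forall>i\<ge>k. x i = 0}"

text \<open>A small category given by its set of morphisms (objects are identified with
  identity morphisms), range (codomain) and source (domain) maps, a composition
  (cmp f g means f after g, defined when src f = rng g), and a degree map.\<close>

record 'a kgraph =
  paths :: "'a set"
  rng :: "'a \<Rightarrow> 'a"
  src :: "'a \<Rightarrow> 'a"
  cmp :: "'a \<Rightarrow> 'a \<Rightarrow> 'a"
  deg :: "'a \<Rightarrow> nat \<Rightarrow> nat"

definition is_category :: "'a kgraph \<Rightarrow> bool" where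
  "is_category G \<longleftrightarrow>
     (\<forall>f\<in>paths G. rng G f \<in> paths G \<and> src G f \<in> paths G
        \<and> rng G (rng G f) = rng G f \<and> src G (rng G f) = rng G f
        \<and> rng G (src G f) = src G f \<and> src G (src G f) = src G f
        \<and> cmp G (rng G f) f = f \<and> cmp G f (src G f) = f)
   \<and> (\<forall>f\<in>paths G. \<forall>g\<in>paths G. src G f = rng G g \<longrightarrow>
        cmp G f g \<in> paths G \<and> rng G (cmp G f g) = rng G f \<and> src G (cmp G f g) = src G g)
   \<and> (\<forall>f\<in>paths G. \<forall>g\<in>paths G. \<forall>h\<in>paths G. src G f = rng G g \<longrightarrow> src G g = rng G h \<longrightarrow>
        cmp G (cmp G f g) h = cmp G f (cmp G g h))"

definition is_kgraph :: "nat \<Rightarrow> 'a kgraph \<Rightarrow> bool" where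
  "is_kgraph k G \<longleftrightarrow>
     is_category G \<and> countable (paths G)
   \<and> (\<forall>f\<in>paths G. deg G f \<in> NK k)
   \<and> (\<forall>f\<in>paths G. rng G f = f \<longrightarrow> deg G f = 0)
   \<and> (\<forall>f\<in>paths G. \<forall>g\<in>paths G. src G f = rng G g \<longrightarrow> deg G (cmp G f g) = deg G f + deg G g)
   \<and> (\<forall>l\<in>paths G. \<forall>m\<in>NK k. \<forall>n\<in>NK k. deg G l = m + n \<longrightarrow>
        (\<exists>!(\<mu>, \<nu>). \<mu> \<in> paths G \<and> \<nu> \<in> paths G \<and> deg G \<mu> = m \<and> deg G \<nu> = n
                 \<and> src G \<mu> = rng G \<nu> \<and> l = cmp G \<mu> \<nu>))"

definition seg :: "'a kgraph \<Rightarrow> 'a \<Rightarrow> (nat \<Rightarrow> nat) \<Rightarrow> (nat \<Rightarrow> nat) \<Rightarrow> 'a" where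
  "seg G x l m = (THE \<mu>. \<exists>\<alpha> \<beta>. \<alpha> \<in> paths G \<and> \<mu> \<in> paths G \<and> \<beta> \<in> paths G
       \<and> deg G \<alpha> = l \<and> deg G \<mu> = m - l \<and> deg G \<beta> = deg G x - m
       \<and> src G \<alpha> = rng G \<mu> \<and> src G \<mu> = rng G \<beta>
       \<and> x = cmp G (cmp G \<alpha> \<mu>) \<beta>)"

definition dual :: "(nat \<Rightarrow> nat) \<Rightarrow> 'a kgraph \<Rightarrow> 'a kgraph" where
  "dual p G = \<lparr> paths = {x \<in> paths G. p \<le> deg G x},
               rng = (\<lambda>x. seg G x 0 p),
               src = (\<lambda>x. seg G x (deg G x - p) (deg G x)),
               cmp = (\<lambda>x y. cmp G x (seg G y p (deg G y))),
               deg = (\<lambda>x. deg G x - p) \<rparr>"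

end

theory Submission
  imports Defs
begin

text \<open>The dual \<open>(p\<Lambda>, d\<^sub>p)\<close> is itself a \<open>k\<close>-graph. The key identity is
  \<open>\<lambda> \<circ>\<^sub>p \<mu> = \<lambda>(0, d(\<lambda>) - p) \<mu>\<close>, which lets unique factorisation in \<open>\<Lambda>\<close> pass to
  \<open>p\<Lambda>\<close>. For \<open>m + p \<le> d(\<lambda>)\<close> the path \<open>\<lambda>\<close> factors in \<open>p\<Lambda>\<close> as
  \<open>\<lambda>(0, m + p) \<circ>\<^sub>p \<lambda>(m, d(\<lambda>))\<close> with first factor of \<open>d\<^sub>p\<close>-degree \<open>m\<close>, so unique
  factorisation in \<open>p\<Lambda>\<close> shows that the segments \<open>\<lambda>(0, m)\<close> and \<open>\<lambda>(m, d\<^sub>p(\<lambda>))\<close> of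
  \<open>p\<Lambda>\<close> are the segments \<open>\<lambda>(0, m + p)\<close> and \<open>\<lambda>(m, d(\<lambda>))\<close> of \<open>\<Lambda>\<close>. Range, source
  and composition of \<open>q(p\<Lambda>)\<close> are built from exactly such segments, and this turns them
  into those of \<open>(q + p)\<Lambda>\<close>.\<close>

abbreviation pre :: "'a kgraph \<Rightarrow> 'a \<Rightarrow> (nat \<Rightarrow> nat) \<Rightarrow> 'a" where
  "pre G x m \<equiv> seg G x 0 m"

abbreviation suf :: "'a kgraph \<Rightarrow> 'a \<Rightarrow> (nat \<Rightarrow> nat) \<Rightarrow> 'a" where
  "suf G x m \<equiv> seg G x m (deg G x)"

lemma NK_downward_closed: "(x :: nat \<Rightarrow> nat) \<le> y \<Longrightarrow> y \<in> NK k \<Longrightarrow> x \<in> NK k"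
  unfolding NK_def le_fun_def by (simp, metis le_zero_eq)

lemma dual_sel:
  "paths (dual p G) = {x \<in> paths G. p \<le> deg G x}"
  "rng (dual p G) x = pre G x p"
  "src (dual p G) x = suf G x (deg G x - p)"
  "cmp (dual p G) x y = cmp G x (suf G y p)"
  "deg (dual p G) x = deg G x - p"
  by (simp_all add: dual_def)

lemma add_le_iff_le_diff_fun: "(q :: 'a \<Rightarrow> nat) + p \<le> d \<longleftrightarrow> p \<le> d \<and> q \<le> d - p"
  unfolding le_fun_def plus_fun_apply minus_apply by (meson add_leD2 le_diff_conv2 le_diff_conv)

lemma diff_add_fun: "(p :: 'a \<Rightarrow> nat) \<le> d \<Longrightarrow> d - p + p = d"
  by (auto simp: le_fun_def fun_eq_iff)

locale k_graph =
  fixes k :: nat and G :: "'a kgraph"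
  assumes is_kgraph: "is_kgraph k G"
begin

lemma category: "is_category G"
  using is_kgraph by (simp add: is_kgraph_def)

lemma
  assumes "f \<in> paths G"
  shows rng_in_paths: "rng G f \<in> paths G" and src_in_paths: "src G f \<in> paths G"
    and rng_rng: "rng G (rng G f) = rng G f" and src_rng: "src G (rng G f) = rng G f"
    and rng_src: "rng G (src G f) = src G f"
    and cmp_rng_left: "cmp G (rng G f) f = f" and cmp_src_right: "cmp G f (src G f) = f"
  using category assms unfolding is_category_def by simp_all

lemma
  assumes "f \<in> paths G" "g \<in> paths G" "src G f = rng G g"
  shows cmp_in_paths: "cmp G f g \<in> paths G"
    and rng_cmp: "rng G (cmp G f g) = rng G f" and src_cmp: "src G (cmp G f g) = src G g"
  using category assms unfolding is_category_def by simp_all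

lemma deg_cmp:
  "\<lbrakk>f \<in> paths G; g \<in> paths G; src G f = rng G g\<rbrakk> \<Longrightarrow> deg G (cmp G f g) = deg G f + deg G g"
  using is_kgraph unfolding is_kgraph_def by simp

lemma cmp_assoc:
  "\<lbrakk>f \<in> paths G; g \<in> paths G; h \<in> paths G; src G f = rng G g; src G g = rng G h\<rbrakk>
    \<Longrightarrow> cmp G (cmp G f g) h = cmp G f (cmp G g h)"
  using category unfolding is_category_def by simp

lemma deg_in_NK: "f \<in> paths G \<Longrightarrow> deg G f \<in> NK k"
  using is_kgraph by (simp add: is_kgraph_def)

lemma deg_rng: "f \<in> paths G \<Longrightarrow> deg G (rng G f) = 0"
  using is_kgraph rng_in_paths rng_rng unfolding is_kgraph_def by simp

lemma deg_src: "f \<in> paths G \<Longrightarrow> deg G (src G f) = 0"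
  using is_kgraph src_in_paths rng_src unfolding is_kgraph_def by simp

lemma factorisation:
  "\<lbrakk>l \<in> paths G; m \<in> NK k; n \<in> NK k; deg G l = m + n\<rbrakk> \<Longrightarrow>
    \<exists>!(\<mu>, \<nu>). \<mu> \<in> paths G \<and> \<nu> \<in> paths G \<and> deg G \<mu> = m \<and> deg G \<nu> = n
      \<and> src G \<mu> = rng G \<nu> \<and> l = cmp G \<mu> \<nu>"
  using is_kgraph unfolding is_kgraph_def by blast

lemma factorisation_unique:
  assumes "a \<in> paths G" "b \<in> paths G" "a' \<in> paths G" "b' \<in> paths G"
    and "src G a = rng G b" "src G a' = rng G b'"
    and "cmp G a b = cmp G a' b'" "deg G a = deg G a'"
  shows "a = a'" "b = b'"
proof -
  let ?l = "cmp G a b"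
  have "deg G ?l = deg G a + deg G b" "deg G ?l = deg G a + deg G b'"
    using deg_cmp[OF assms(1,2,5)] deg_cmp[OF assms(3,4,6)] assms(7,8) by simp_all
  then have "deg G b' = deg G b" by simp
  moreover have "?l \<in> paths G" using cmp_in_paths assms by blast
  ultimately have "\<exists>!(\<mu>, \<nu>). \<mu> \<in> paths G \<and> \<nu> \<in> paths G \<and> deg G \<mu> = deg G a
      \<and> deg G \<nu> = deg G b \<and> src G \<mu> = rng G \<nu> \<and> ?l = cmp G \<mu> \<nu>"
    using factorisation deg_in_NK assms \<open>deg G ?l = deg G a + deg G b\<close> by blast
  then have "(a, b) = (a', b')"
    using assms \<open>deg G b' = deg G b\<close> by (elim ex1E) auto
  then show "a = a'" "b = b'" by simp_all
qed

lemma seg_eqI: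
  assumes "\<alpha> \<in> paths G" "\<mu> \<in> paths G" "\<beta> \<in> paths G"
    and "src G \<alpha> = rng G \<mu>" "src G \<mu> = rng G \<beta>" "x = cmp G (cmp G \<alpha> \<mu>) \<beta>"
    and "deg G \<alpha> = l" "deg G \<mu> = m - l" "deg G \<beta> = deg G x - m"
  shows "seg G x l m = \<mu>"
  unfolding seg_def
proof (rule the_equality)
  fix \<mu>'
  assume "\<exists>\<alpha>' \<beta>'. \<alpha>' \<in> paths G \<and> \<mu>' \<in> paths G \<and> \<beta>' \<in> paths G
    \<and> deg G \<alpha>' = l \<and> deg G \<mu>' = m - l \<and> deg G \<beta>' = deg G x - m
    \<and> src G \<alpha>' = rng G \<mu>' \<and> src G \<mu>' = rng G \<beta>' \<and> x = cmp G (cmp G \<alpha>' \<mu>') \<beta>'"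
  then obtain \<alpha>' \<beta>' where \<alpha>': "\<alpha>' \<in> paths G" "deg G \<alpha>' = l" "src G \<alpha>' = rng G \<mu>'"
    and \<mu>': "\<mu>' \<in> paths G" "deg G \<mu>' = m - l" "src G \<mu>' = rng G \<beta>'"
    and \<beta>': "\<beta>' \<in> paths G" "x = cmp G (cmp G \<alpha>' \<mu>') \<beta>'"
    by blast
  have "deg G (cmp G \<alpha> \<mu>) = deg G (cmp G \<alpha>' \<mu>')"
    using deg_cmp assms \<alpha>' \<mu>' by simp
  then have "cmp G \<alpha>' \<mu>' = cmp G \<alpha> \<mu>"
    using factorisation_unique(1)[of "cmp G \<alpha>' \<mu>'" \<beta>' "cmp G \<alpha> \<mu>" \<beta>]
      assms \<alpha>' \<mu>' \<beta>' cmp_in_paths src_cmp by simp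
  then show "\<mu>' = \<mu>"
    using factorisation_unique(2)[of \<alpha>' \<mu>' \<alpha> \<mu>] assms \<alpha>' \<mu>' by simp
qed (use assms in blast)

lemma pre_cmp:
  assumes "a \<in> paths G" "b \<in> paths G" "src G a = rng G b"
  shows "pre G (cmp G a b) (deg G a) = a"
  by (rule seg_eqI[of "rng G a" a b])
    (use assms in \<open>simp_all add: rng_in_paths src_rng cmp_rng_left deg_rng deg_cmp\<close>)

lemma suf_cmp:
  assumes "a \<in> paths G" "b \<in> paths G" "src G a = rng G b"
  shows "suf G (cmp G a b) (deg G a) = b"
  by (rule seg_eqI[of a b "src G b"])
    (use assms cmp_src_right[OF cmp_in_paths[OF assms]] src_cmp[OF assms] in
      \<open>simp_all add: src_in_paths rng_src deg_src deg_cmp\<close>)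

lemma
  assumes "x \<in> paths G" "m \<le> deg G x"
  shows pre_in_paths: "pre G x m \<in> paths G" and suf_in_paths: "suf G x m \<in> paths G"
    and deg_pre: "deg G (pre G x m) = m" and deg_suf: "deg G (suf G x m) = deg G x - m"
    and src_pre: "src G (pre G x m) = rng G (suf G x m)"
    and cmp_pre_suf: "cmp G (pre G x m) (suf G x m) = x"
    and rng_pre: "rng G (pre G x m) = rng G x" and src_suf: "src G (suf G x m) = src G x"
proof -
  have "m \<in> NK k"
    using NK_downward_closed assms deg_in_NK by blast
  moreover have "deg G x - m \<in> NK k"
    by (rule NK_downward_closed[OF _ deg_in_NK[OF assms(1)]]) (simp add: le_fun_def)
  moreover have "deg G x = m + (deg G x - m)"
    using assms(2) by (auto simp: le_fun_def fun_eq_iff)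
  ultimately obtain a b where ab: "a \<in> paths G" "b \<in> paths G" "deg G a = m"
      "src G a = rng G b" "x = cmp G a b"
    using factorisation[OF assms(1)] by blast
  then have "pre G x m = a" "suf G x m = b"
    using pre_cmp suf_cmp by blast+
  then show "pre G x m \<in> paths G" "suf G x m \<in> paths G" "deg G (pre G x m) = m"
    "deg G (suf G x m) = deg G x - m" "src G (pre G x m) = rng G (suf G x m)"
    "cmp G (pre G x m) (suf G x m) = x" "rng G (pre G x m) = rng G x" "src G (suf G x m) = src G x"
    using ab by (simp_all add: deg_cmp rng_cmp src_cmp)
qed

lemma pre_full: "x \<in> paths G \<Longrightarrow> pre G x (deg G x) = x"
  using pre_cmp[of x "src G x"] by (simp add: src_in_paths rng_src cmp_src_right)

lemma suf_full: "x \<in> paths G \<Longrightarrow> suf G x (deg G x) = src G x"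
  using suf_cmp[of x "src G x"] by (simp add: src_in_paths rng_src cmp_src_right)

lemma suf_zero: "x \<in> paths G \<Longrightarrow> suf G x 0 = x"
  using suf_cmp[of "rng G x" x] by (simp add: rng_in_paths src_rng cmp_rng_left deg_rng)

lemma
  assumes "a \<in> paths G" "b \<in> paths G" "src G a = rng G b" "m \<le> deg G a"
  shows pre_cmp_le: "pre G (cmp G a b) m = pre G a m"
    and suf_cmp_le: "suf G (cmp G a b) m = cmp G (suf G a m) b"
proof -
  let ?a\<^sub>1 = "pre G a m" and ?a\<^sub>2 = "suf G a m"
  have a: "?a\<^sub>1 \<in> paths G" "?a\<^sub>2 \<in> paths G" "deg G ?a\<^sub>1 = m"
    "src G ?a\<^sub>1 = rng G ?a\<^sub>2" "src G ?a\<^sub>2 = rng G b"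
    using assms by (simp_all add: pre_in_paths suf_in_paths deg_pre src_pre src_suf)
  have "cmp G a b = cmp G ?a\<^sub>1 (cmp G ?a\<^sub>2 b)"
    using cmp_assoc[OF a(1,2) assms(2) a(4,5)] assms by (simp add: cmp_pre_suf)
  moreover have "src G ?a\<^sub>1 = rng G (cmp G ?a\<^sub>2 b)"
    using a assms by (simp add: rng_cmp)
  ultimately show "pre G (cmp G a b) m = pre G a m" "suf G (cmp G a b) m = cmp G (suf G a m) b"
    using pre_cmp[OF a(1) cmp_in_paths[OF a(2) assms(2) a(5)]]
      suf_cmp[OF a(1) cmp_in_paths[OF a(2) assms(2) a(5)]] a(3)
    by simp_all
qed

lemma suf_eq_cmp:
  assumes "x \<in> paths G" "m + n \<le> deg G x"
  shows "suf G x m = cmp G (suf G (pre G x (m + n)) m) (suf G x (m + n))"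
proof -
  have "m \<le> deg G (pre G x (m + n))"
    using assms by (simp add: deg_pre le_fun_def)
  then show ?thesis
    using suf_cmp_le[of "pre G x (m + n)" "suf G x (m + n)" m] assms
    by (simp add: pre_in_paths suf_in_paths src_pre cmp_pre_suf)
qed

lemma
  assumes "x \<in> paths G" "m + n \<le> deg G x"
  shows suf_suf: "suf G (suf G x m) n = suf G x (m + n)"
    and pre_suf: "pre G (suf G x m) n = suf G (pre G x (m + n)) m"
proof -
  let ?a = "pre G x (m + n)"
  have a: "?a \<in> paths G" "m \<le> deg G ?a"
    using assms by (simp_all add: pre_in_paths deg_pre le_fun_def)
  have b: "suf G ?a m \<in> paths G" "deg G (suf G ?a m) = n"
    "src G (suf G ?a m) = rng G (suf G x (m + n))"
    using suf_in_paths[OF a] deg_suf[OF a] src_suf[OF a] src_pre[OF assms] deg_pre[OF assms]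
    by simp_all
  show "suf G (suf G x m) n = suf G x (m + n)" "pre G (suf G x m) n = suf G ?a m"
    using suf_eq_cmp[OF assms] suf_cmp[OF b(1) suf_in_paths[OF assms] b(3)]
      pre_cmp[OF b(1) suf_in_paths[OF assms] b(3)] b(2)
    by simp_all
qed

lemma suf_cmp_ge:
  assumes "a \<in> paths G" "b \<in> paths G" "src G a = rng G b" "n \<le> deg G b"
  shows "suf G (cmp G a b) (deg G a + n) = suf G b n"
  using suf_suf[of "cmp G a b" "deg G a" n] suf_cmp[of a b] assms
  by (simp add: cmp_in_paths deg_cmp)

lemma cmp_suf_eq_cmp_pre:
  assumes "f \<in> paths G" "p \<le> deg G f" "g \<in> paths G" "p \<le> deg G g"
    and "suf G f (deg G f - p) = pre G g p"
  shows "cmp G f (suf G g p) = cmp G (pre G f (deg G f - p)) g"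
proof -
  let ?f\<^sub>0 = "pre G f (deg G f - p)"
  have le: "deg G f - p \<le> deg G f" by (simp add: le_fun_def)
  have f\<^sub>0: "?f\<^sub>0 \<in> paths G" "src G ?f\<^sub>0 = rng G (pre G g p)"
    "cmp G ?f\<^sub>0 (pre G g p) = f"
    using pre_in_paths[OF assms(1) le] src_pre[OF assms(1) le] cmp_pre_suf[OF assms(1) le] assms(5)
    by simp_all
  have "cmp G f (suf G g p) = cmp G (cmp G ?f\<^sub>0 (pre G g p)) (suf G g p)"
    using f\<^sub>0 by simp
  also have "\<dots> = cmp G ?f\<^sub>0 (cmp G (pre G g p) (suf G g p))"
    by (rule cmp_assoc) (use f\<^sub>0 assms in \<open>simp_all add: pre_in_paths suf_in_paths src_pre\<close>)
  also have "\<dots> = cmp G ?f\<^sub>0 g"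
    using assms by (simp add: cmp_pre_suf)
  finally show ?thesis .
qed

lemma dual_src_eq_rng:
  assumes "f \<in> paths (dual p G)" "g \<in> paths (dual p G)"
    and "src (dual p G) f = rng (dual p G) g"
  shows "src G f = rng G (suf G g p)"
proof -
  have "deg G f - p \<le> deg G f" by (simp add: le_fun_def)
  then show ?thesis
    using assms src_suf[of f "deg G f - p"] src_pre[of g p] by (simp add: dual_sel)
qed

lemma dual_identity_laws:
  assumes "f \<in> paths (dual p G)"
  shows "rng (dual p G) f \<in> paths (dual p G)" "src (dual p G) f \<in> paths (dual p G)"
    "rng (dual p G) (rng (dual p G) f) = rng (dual p G) f"
    "src (dual p G) (rng (dual p G) f) = rng (dual p G) f"
    "rng (dual p G) (src (dual p G) f) = src (dual p G) f"
    "src (dual p G) (src (dual p G) f) = src (dual p G) f"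
    "cmp (dual p G) (rng (dual p G) f) f = f"
    "cmp (dual p G) f (src (dual p G) f) = f"
proof -
  have f: "f \<in> paths G" "p \<le> deg G f" and "deg G f - p \<le> deg G f"
    using assms by (simp_all add: dual_sel le_fun_def)
  let ?r = "pre G f p" and ?s = "suf G f (deg G f - p)"
  have r: "?r \<in> paths G" "deg G ?r = p"
    using f by (simp_all add: pre_in_paths deg_pre)
  have s: "?s \<in> paths G" "deg G ?s = p" "src G ?s = src G f"
    using f \<open>deg G f - p \<le> deg G f\<close>
    by (simp_all add: suf_in_paths deg_suf src_suf) (auto simp: le_fun_def fun_eq_iff)
  show "rng (dual p G) f \<in> paths (dual p G)" "src (dual p G) f \<in> paths (dual p G)"
    "rng (dual p G) (rng (dual p G) f) = rng (dual p G) f"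
    "src (dual p G) (rng (dual p G) f) = rng (dual p G) f"
    "rng (dual p G) (src (dual p G) f) = src (dual p G) f"
    "src (dual p G) (src (dual p G) f) = src (dual p G) f"
    "cmp (dual p G) (rng (dual p G) f) f = f"
    "cmp (dual p G) f (src (dual p G) f) = f"
    using r s pre_full[OF r(1)] suf_zero[OF r(1)] pre_full[OF s(1)] suf_zero[OF s(1)]
      suf_full[OF s(1)] cmp_pre_suf[OF f] cmp_src_right[OF f(1)]
    by (simp_all add: dual_sel)
qed

lemma dual_cmpE:
  assumes "f \<in> paths (dual p G)" "g \<in> paths (dual p G)"
    and "src (dual p G) f = rng (dual p G) g"
  obtains f' where "f' \<in> paths G" "deg G f' = deg G f - p" "src G f' = rng G g"
    and "cmp (dual p G) f g = cmp G f' g"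
proof
  have f: "f \<in> paths G" "p \<le> deg G f" and g: "g \<in> paths G" "p \<le> deg G g"
    and fg: "suf G f (deg G f - p) = pre G g p" and "deg G f - p \<le> deg G f"
    using assms by (simp_all add: dual_sel le_fun_def)
  then show "pre G f (deg G f - p) \<in> paths G" "deg G (pre G f (deg G f - p)) = deg G f - p"
    "src G (pre G f (deg G f - p)) = rng G g"
    by (simp_all add: pre_in_paths deg_pre src_pre rng_pre)
  show "cmp (dual p G) f g = cmp G (pre G f (deg G f - p)) g"
    using cmp_suf_eq_cmp_pre[OF f g fg] by (simp add: dual_sel)
qed

lemma dual_cmp_laws:
  assumes "f \<in> paths (dual p G)" "g \<in> paths (dual p G)"
    and "src (dual p G) f = rng (dual p G) g"
  shows "cmp (dual p G) f g \<in> paths (dual p G)"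
    "rng (dual p G) (cmp (dual p G) f g) = rng (dual p G) f"
    "src (dual p G) (cmp (dual p G) f g) = src (dual p G) g"
    "deg (dual p G) (cmp (dual p G) f g) = deg (dual p G) f + deg (dual p G) g"
proof -
  have f: "p \<le> deg G f" and g: "g \<in> paths G" "p \<le> deg G g"
    using assms by (simp_all add: dual_sel)
  obtain f' where f': "f' \<in> paths G" "deg G f' = deg G f - p" "src G f' = rng G g"
    and fg': "cmp (dual p G) f g = cmp G f' g"
    using dual_cmpE[OF assms] .
  have deg_fg': "deg G (cmp G f' g) = (deg G f - p) + deg G g"
    using deg_cmp[OF f'(1) g(1) f'(3)] f'(2) by simp
  show "cmp (dual p G) f g \<in> paths (dual p G)"
    using fg' deg_fg' cmp_in_paths[OF f'(1) g(1) f'(3)] g(2)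
    by (simp add: dual_sel le_fun_def trans_le_add2)
  show "deg (dual p G) (cmp (dual p G) f g) = deg (dual p G) f + deg (dual p G) g"
    using fg' deg_fg' f g(2) by (auto simp: dual_sel le_fun_def fun_eq_iff)
  show "rng (dual p G) (cmp (dual p G) f g) = rng (dual p G) f"
    using pre_cmp_le[OF _ suf_in_paths[OF g] dual_src_eq_rng[OF assms] f] assms(1)
    by (simp add: dual_sel)
  have "deg G (cmp G f' g) - p = deg G f' + (deg G g - p)"
    using deg_fg' f'(2) g(2) by (auto simp: le_fun_def fun_eq_iff)
  then show "src (dual p G) (cmp (dual p G) f g) = src (dual p G) g"
    using fg' suf_cmp_ge[OF f'(1) g(1) f'(3), of "deg G g - p"] by (simp add: dual_sel le_fun_def)
qed

lemma dual_cmp_assoc: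
  assumes "f \<in> paths (dual p G)" "g \<in> paths (dual p G)" "h \<in> paths (dual p G)"
    and "src (dual p G) f = rng (dual p G) g" "src (dual p G) g = rng (dual p G) h"
  shows "cmp (dual p G) (cmp (dual p G) f g) h = cmp (dual p G) f (cmp (dual p G) g h)"
proof -
  have g: "g \<in> paths G" "p \<le> deg G g" and h: "h \<in> paths G" "p \<le> deg G h"
    and f: "f \<in> paths G"
    using assms by (simp_all add: dual_sel)
  have "src G g = rng G (suf G h p)"
    using dual_src_eq_rng[OF assms(2,3,5)] .
  then have "suf G (cmp G g (suf G h p)) p = cmp G (suf G g p) (suf G h p)"
    using suf_cmp_le[OF g(1) suf_in_paths[OF h] _ g(2)] by simp
  moreover have "cmp G (cmp G f (suf G g p)) (suf G h p) = cmp G f (cmp G (suf G g p) (suf G h p))"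
    by (rule cmp_assoc)
      (use f g h dual_src_eq_rng[OF assms(1,2,4)] \<open>src G g = rng G (suf G h p)\<close> in
        \<open>simp_all add: suf_in_paths src_suf\<close>)
  ultimately show ?thesis by (simp add: dual_sel)
qed

lemma dual_split:
  assumes "x \<in> paths G" "m + p \<le> deg G x"
  shows "pre G x (m + p) \<in> paths (dual p G)" "suf G x m \<in> paths (dual p G)"
    "deg (dual p G) (pre G x (m + p)) = m"
    "deg (dual p G) (suf G x m) = deg G x - p - m"
    "src (dual p G) (pre G x (m + p)) = rng (dual p G) (suf G x m)"
    "cmp (dual p G) (pre G x (m + p)) (suf G x m) = x"
proof -
  have m: "m \<le> deg G x"
    by (rule order_trans[OF _ assms(2)]) (simp add: le_fun_def)
  show "pre G x (m + p) \<in> paths (dual p G)" "deg (dual p G) (pre G x (m + p)) = m"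
    using assms by (simp_all add: dual_sel pre_in_paths deg_pre le_fun_def)
  show "suf G x m \<in> paths (dual p G)"
    using suf_in_paths[OF assms(1) m] deg_suf[OF assms(1) m] add_le_iff_le_diff_fun[of p m] assms(2)
    by (simp add: dual_sel add.commute)
  show "deg (dual p G) (suf G x m) = deg G x - p - m"
    using deg_suf[OF assms(1) m] by (simp add: dual_sel fun_eq_iff add.commute)
  show "src (dual p G) (pre G x (m + p)) = rng (dual p G) (suf G x m)"
    using pre_suf[OF assms] deg_pre[OF assms] by (simp add: dual_sel)
  show "cmp (dual p G) (pre G x (m + p)) (suf G x m) = x"
    using suf_suf[OF assms] cmp_pre_suf[OF assms] by (simp add: dual_sel)
qed

lemma dual_factors:
  assumes "\<mu> \<in> paths (dual p G)" "\<nu> \<in> paths (dual p G)"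
    and "src (dual p G) \<mu> = rng (dual p G) \<nu>"
  shows "pre G (cmp (dual p G) \<mu> \<nu>) (deg G \<mu>) = \<mu>"
    "suf G (cmp (dual p G) \<mu> \<nu>) (deg G \<mu> - p) = \<nu>"
proof -
  have \<mu>: "\<mu> \<in> paths G" and \<nu>: "\<nu> \<in> paths G" "p \<le> deg G \<nu>"
    using assms by (simp_all add: dual_sel)
  show "pre G (cmp (dual p G) \<mu> \<nu>) (deg G \<mu>) = \<mu>"
    using pre_cmp[OF \<mu> suf_in_paths[OF \<nu>] dual_src_eq_rng[OF assms]]
    by (simp add: dual_sel)
  obtain \<mu>' where "\<mu>' \<in> paths G" "deg G \<mu>' = deg G \<mu> - p" "src G \<mu>' = rng G \<nu>"
    and "cmp (dual p G) \<mu> \<nu> = cmp G \<mu>' \<nu>"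
    using dual_cmpE[OF assms] .
  then show "suf G (cmp (dual p G) \<mu> \<nu>) (deg G \<mu> - p) = \<nu>"
    using suf_cmp[of \<mu>' \<nu>] \<nu> by simp
qed

lemma dual_factorisation:
  assumes "l \<in> paths (dual p G)" "deg (dual p G) l = m + n"
  shows "\<exists>!(\<mu>, \<nu>). \<mu> \<in> paths (dual p G) \<and> \<nu> \<in> paths (dual p G)
      \<and> deg (dual p G) \<mu> = m \<and> deg (dual p G) \<nu> = n
      \<and> src (dual p G) \<mu> = rng (dual p G) \<nu> \<and> l = cmp (dual p G) \<mu> \<nu>"
proof -
  have "l \<in> paths G" "deg G l = m + n + p"
    using assms diff_add_fun[of p "deg G l"] by (simp_all add: dual_sel)
  then have l': "l \<in> paths G" "m + p \<le> deg G l" "deg G l - p - m = n"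
    by (simp_all add: le_fun_def)
  show ?thesis
  proof (rule ex1I[of _ "(pre G l (m + p), suf G l m)"], clarsimp)
    show "pre G l (m + p) \<in> paths (dual p G) \<and> suf G l m \<in> paths (dual p G)
      \<and> deg (dual p G) (pre G l (m + p)) = m \<and> deg (dual p G) (suf G l m) = n
      \<and> src (dual p G) (pre G l (m + p)) = rng (dual p G) (suf G l m)
      \<and> l = cmp (dual p G) (pre G l (m + p)) (suf G l m)"
      using dual_split[OF l'(1,2)] l'(3) by simp
  next
    fix \<mu>\<nu> :: "'a \<times> 'a"
    assume "case \<mu>\<nu> of (\<mu>, \<nu>) \<Rightarrow> \<mu> \<in> paths (dual p G) \<and> \<nu> \<in> paths (dual p G)
      \<and> deg (dual p G) \<mu> = m \<and> deg (dual p G) \<nu> = n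
      \<and> src (dual p G) \<mu> = rng (dual p G) \<nu> \<and> l = cmp (dual p G) \<mu> \<nu>"
    then obtain \<mu> \<nu> where \<mu>\<nu>: "\<mu>\<nu> = (\<mu>, \<nu>)" "\<mu> \<in> paths (dual p G)" "\<nu> \<in> paths (dual p G)"
      "src (dual p G) \<mu> = rng (dual p G) \<nu>" "l = cmp (dual p G) \<mu> \<nu>"
      and "deg G \<mu> - p = m"
      by (auto simp: dual_sel)
    moreover have "deg G \<mu> = m + p"
      using \<mu>\<nu>(2) \<open>deg G \<mu> - p = m\<close> diff_add_fun[of p "deg G \<mu>"] by (simp add: dual_sel)
    ultimately show "\<mu>\<nu> = (pre G l (m + p), suf G l m)"
      using dual_factors[OF \<mu>\<nu>(2-4)] by simp
  qed
qed

lemma is_category_dual: "is_category (dual p G)"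
  unfolding is_category_def using dual_identity_laws dual_cmp_laws dual_cmp_assoc by simp

lemma is_kgraph_dual: "is_kgraph k (dual p G)"
  unfolding is_kgraph_def
proof (intro conjI ballI impI)
  show "is_category (dual p G)"
    by (rule is_category_dual)
  show "countable (paths (dual p G))"
    using is_kgraph countable_subset[of "paths (dual p G)" "paths G"]
    by (auto simp: is_kgraph_def dual_sel)
next
  fix f assume "f \<in> paths (dual p G)"
  moreover have "deg G f - p \<le> deg G f" by (simp add: le_fun_def)
  ultimately show "deg (dual p G) f \<in> NK k"
    using NK_downward_closed deg_in_NK by (simp add: dual_sel)
next
  fix f assume "f \<in> paths (dual p G)" "rng (dual p G) f = f"
  then show "deg (dual p G) f = 0"
    using deg_pre[of f p] by (simp add: dual_sel)
next
  fix f g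
  assume "f \<in> paths (dual p G)" "g \<in> paths (dual p G)" "src (dual p G) f = rng (dual p G) g"
  then show "deg (dual p G) (cmp (dual p G) f g) = deg (dual p G) f + deg (dual p G) g"
    by (rule dual_cmp_laws)
next
  fix l m n
  assume "l \<in> paths (dual p G)" "deg (dual p G) l = m + n"
  then show "\<exists>!(\<mu>, \<nu>). \<mu> \<in> paths (dual p G) \<and> \<nu> \<in> paths (dual p G)
      \<and> deg (dual p G) \<mu> = m \<and> deg (dual p G) \<nu> = n
      \<and> src (dual p G) \<mu> = rng (dual p G) \<nu> \<and> l = cmp (dual p G) \<mu> \<nu>"
    by (rule dual_factorisation)
qed

lemma
  assumes "x \<in> paths (dual p G)" "m \<le> deg (dual p G) x"
  shows pre_dual: "pre (dual p G) x m = pre G x (m + p)"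
    and suf_dual: "suf (dual p G) x m = suf G x m"
proof -
  interpret H: k_graph k "dual p G"
    by unfold_locales (rule is_kgraph_dual)
  have x: "x \<in> paths G" "m + p \<le> deg G x"
    using assms add_le_iff_le_diff_fun[of m p] by (simp_all add: dual_sel)
  show "pre (dual p G) x m = pre G x (m + p)" "suf (dual p G) x m = suf G x m"
    using H.pre_cmp[OF dual_split(1,2,5)[OF x]] H.suf_cmp[OF dual_split(1,2,5)[OF x]]
      dual_split(3,6)[OF x]
    by simp_all
qed

end

theorem proposition3p4:
  fixes G :: "'a kgraph" and k :: nat and p q :: "nat \<Rightarrow> nat"
  assumes "k \<ge> 1" and "is_kgraph k G" and "p \<in> NK k" and "q \<in> NK k"
  shows "paths (dual q (dual p G)) = paths (dual (q + p) G)
    \<and> (\<forall>x\<in>paths (dual (q + p) G).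
          rng (dual q (dual p G)) x = rng (dual (q + p) G) x
        \<and> src (dual q (dual p G)) x = src (dual (q + p) G) x
        \<and> deg (dual q (dual p G)) x = deg (dual (q + p) G) x)
    \<and> (\<forall>x\<in>paths (dual (q + p) G). \<forall>y\<in>paths (dual (q + p) G).
          src (dual (q + p) G) x = rng (dual (q + p) G) y \<longrightarrow>
          cmp (dual q (dual p G)) x y = cmp (dual (q + p) G) x y)"
proof -
  interpret k_graph k G by unfold_locales (fact assms(2))
  have paths: "paths (dual q (dual p G)) = paths (dual (q + p) G)"
    using add_le_iff_le_diff_fun by (auto simp: dual_sel)
  have "rng (dual q (dual p G)) x = rng (dual (q + p) G) x
      \<and> src (dual q (dual p G)) x = src (dual (q + p) G) x
      \<and> deg (dual q (dual p G)) x = deg (dual (q + p) G) x"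
    if "x \<in> paths (dual q (dual p G))" for x
  proof -
    have x: "x \<in> paths (dual p G)" "q \<le> deg (dual p G) x"
      and "deg (dual p G) x - q \<le> deg (dual p G) x"
      using that by (simp_all add: dual_sel le_fun_def diff_le_mono2)
    then show ?thesis
      using pre_dual[OF x] suf_dual[OF x(1)] by (simp add: dual_sel diff_diff_add add.commute)
  qed
  moreover have "cmp (dual q (dual p G)) x y = cmp (dual (q + p) G) x y"
    if "y \<in> paths (dual q (dual p G))" for x y
  proof -
    have "y \<in> paths (dual p G)" "q \<le> deg (dual p G) y"
      using that by (simp_all add: dual_sel)
    moreover have "y \<in> paths G" "q + p \<le> deg G y"
      using that[unfolded paths] by (simp_all add: dual_sel)
    ultimately show ?thesis
      using suf_dual suf_suf by (simp add: dual_sel)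
  qed
  ultimately show ?thesis
    using paths by simp
qed

end
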